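(* Let $\alpha_1=\alpha_2\neq0$. Then for any $s,b,\beta_1,\beta_2\in\mathbb{R}$ there is no constant $C=C(\alpha_1,\alpha_2,s,b,\beta_1,\beta_2)$ such that \[ \|\partial_xw\|_{X^{\alpha_2,\beta_2}_{s,b-1}}\le C\|w\|_{X^{\alpha_1,\beta_1}_{s,b}}\quad\text{for all } w\in X^{\alpha_1,\beta_1}_{s,b}. \]
   Context: For $\alpha\ne0$, $\beta\in\mathbb{R}$ let $\phi^{\alpha,\beta}(\xi)=\alpha\xi^3-\beta\xi$ and $\langle x\rangle=1+|x|$. For $s,b\in\mathbb{R}$ the Fourier restriction space $X^{\alpha,\beta}_{s,b}$ is the completion of the Schwartz space $\mathscr{S}(\mathbb{R}^2)$ under the norm $\|w\|_{X^{\alpha,\beta}_{s,b}}=\|\langle\xi\rangle^s\langle\tau-\phi^{\alpha,\beta}(\xi)\rangle^b\widehat w(\xi,\tau)\|_{L^2(d\xi\,d\tau)}$, where $\widehat w$ is the space-time Fourier transform. *)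

theory Defs
  imports "HOL-Analysis.Analysis"
begin

text \<open>Functions on space-time \<open>\<real>\<^sup>2\<close> are written \<open>w :: real \<times> real \<Rightarrow> complex\<close>,
  with \<open>w (x, t)\<close>; the Fourier variables are \<open>(\<xi>, \<tau>)\<close>.\<close>

definition japanese :: "real \<Rightarrow> real" where
  "japanese x = 1 + \<bar>x\<bar>"

definition phi :: "real \<Rightarrow> real \<Rightarrow> real \<Rightarrow> real" where
  "phi \<alpha> \<beta> \<xi> = \<alpha> * \<xi> ^ 3 - \<beta> * \<xi>"

definition dx :: "(real \<times> real \<Rightarrow> complex) \<Rightarrow> real \<times> real \<Rightarrow> complex" where
  "dx f = (\<lambda>(x, t). vector_derivative (\<lambda>y::real. f (y, t)) (at x))"

definition dt :: "(real \<times> real \<Rightarrow> complex) \<Rightarrow> real \<times> real \<Rightarrow> complex" where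
  "dt f = (\<lambda>(x, t). vector_derivative (\<lambda>s::real. f (x, s)) (at t))"

fun pderiv_word :: "bool list \<Rightarrow> (real \<times> real \<Rightarrow> complex) \<Rightarrow> real \<times> real \<Rightarrow> complex" where
  "pderiv_word [] f = f"
| "pderiv_word (d # ds) f = (if d then dx else dt) (pderiv_word ds f)"

definition schwartz :: "(real \<times> real \<Rightarrow> complex) set" where
  "schwartz = {f. \<forall>ds. continuous_on UNIV (pderiv_word ds f)
      \<and> (\<forall>x t. (\<lambda>y. pderiv_word ds f (y, t)) differentiable (at x)
               \<and> (\<lambda>s. pderiv_word ds f (x, s)) differentiable (at t))
      \<and> (\<forall>j k::nat. \<exists>M. \<forall>x t. \<bar>x\<bar> ^ j * \<bar>t\<bar> ^ k * cmod (pderiv_word ds f (x, t)) \<le> M)}"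

definition fourier2 :: "(real \<times> real \<Rightarrow> complex) \<Rightarrow> real \<times> real \<Rightarrow> complex" where
  "fourier2 w = (\<lambda>(\<xi>, \<tau>). \<integral>z. w z * exp (- \<i> * complex_of_real (\<xi> * fst z + \<tau> * snd z)) \<partial>lborel)"

text \<open>The norm of the Fourier restriction space \<open>X^{\<alpha>,\<beta>}_{s,b}\<close> (on Schwartz functions,
  where the integral is finite).\<close>
definition Xnorm :: "real \<Rightarrow> real \<Rightarrow> real \<Rightarrow> real \<Rightarrow> (real \<times> real \<Rightarrow> complex) \<Rightarrow> real" where
  "Xnorm \<alpha> \<beta> s b w = sqrt (enn2real (\<integral>\<^sup>+ p.
      ennreal ((japanese (fst p) powr s * japanese (snd p - phi \<alpha> \<beta> (fst p)) powr b
                * cmod (fourier2 w p))\<^sup>2) \<partial>lborel))"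

end

theory Submission
  imports Defs "HOL-Probability.Probability" "HOL-Computational_Algebra.Polynomial"
begin

text \<open>
  The counterexamples are Gaussian wave packets w whose Fourier transform is concentrated on the
  box |\<xi> - a| \<le> a^-2, |\<tau> - c| \<le> 1, with a \<rightarrow> \<infinity>. On this box japanese \<xi> \<approx> a, the
  derivative in x multiplies the Fourier transform by |\<xi>| \<approx> a, and phi \<alpha> \<beta> \<xi> stays within
  O(japanese (a^2 (\<xi> - a))^3) = O(1) of phi \<alpha> \<beta> a. Since \<alpha>1 = \<alpha>2, the two phases differ
  only by (\<beta>2 - \<beta>1) \<xi> = O(a).
  If b > 0, centre the packet on the first phase, c = phi \<alpha> \<beta>1 a: the X_{s,b} norm of w is
  then comparable to its X_{s,0} norm, while the modulation weight of \<partial>x w in X_{s,b-1} is at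
  least of order a^(2b-2), so the ratio of the squared norms grows like a^min(2, 2b). If b \<le> 0,
  centre it on the second phase, c = phi \<alpha> \<beta>2 a: the weight japanese (\<tau> - phi \<alpha> \<beta>1 \<xi>)^2b \<le> 1
  keeps the same upper bound, and the ratio grows like a^2.
\<close>

section \<open>The Japanese bracket\<close>

lemma japanese_ge_1: "1 \<le> japanese x"
  by (simp add: japanese_def)

lemma japanese_pos: "0 < japanese x"
  by (simp add: japanese_def)

lemma japanese_uminus [simp]: "japanese (- x) = japanese x"
  by (simp add: japanese_def)

lemma abs_le_japanese: "\<bar>x\<bar> \<le> japanese x"
  by (simp add: japanese_def)

lemma japanese_mono: "\<bar>x\<bar> \<le> \<bar>y\<bar> \<Longrightarrow> japanese x \<le> japanese y"
  by (simp add: japanese_def)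

lemma japanese_le_mult: "1 \<le> \<bar>l\<bar> \<Longrightarrow> japanese x \<le> japanese (l * x)"
  by (rule japanese_mono) (simp add: abs_mult mult_le_cancel_right1)

lemma japanese_add_le: "japanese (x + y) \<le> japanese x * japanese y"
proof -
  have "0 \<le> \<bar>x\<bar> * \<bar>y\<bar>"
    by simp
  moreover have "(1 + \<bar>x\<bar>) * (1 + \<bar>y\<bar>) = 1 + \<bar>x\<bar> + \<bar>y\<bar> + \<bar>x\<bar> * \<bar>y\<bar>"
    by (simp add: algebra_simps)
  ultimately show ?thesis
    unfolding japanese_def using abs_triangle_ineq[of x y] by linarith
qed

lemma japanese_powr_add_le: "japanese (x + y) powr r \<le> japanese x powr r * japanese y powr \<bar>r\<bar>"
proof (cases "0 \<le> r")
  case True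
  have "japanese (x + y) powr r \<le> (japanese x * japanese y) powr r"
    using True japanese_add_le japanese_pos by (intro powr_mono2) (auto intro: less_imp_le)
  also have "\<dots> = japanese x powr r * japanese y powr r"
    using japanese_pos by (simp add: powr_mult less_imp_le)
  finally show ?thesis
    using True by simp
next
  case False
  have "japanese x \<le> japanese (x + y) * japanese y"
    using japanese_add_le[of "x + y" "- y"] by simp
  then have "japanese x / japanese y \<le> japanese (x + y)"
    using japanese_pos[of y] by (simp add: divide_le_eq)
  then have "japanese (x + y) powr r \<le> (japanese x / japanese y) powr r"
    using False japanese_pos by (intro powr_mono2') auto
  also have "\<dots> = japanese x powr r / japanese y powr r"
    using japanese_ge_1[of x] japanese_ge_1[of y] by (simp add: powr_divide)
  also have "\<dots> = japanese x powr r * japanese y powr \<bar>r\<bar>"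
    using False by (simp add: powr_minus divide_inverse)
  finally show ?thesis .
qed

lemma japanese_powr_add_ge: "japanese x powr r / japanese y powr \<bar>r\<bar> \<le> japanese (x + y) powr r"
proof -
  have "japanese x powr r \<le> japanese (x + y) powr r * japanese y powr \<bar>r\<bar>"
    using japanese_powr_add_le[of "x + y" "- y" r] by simp
  then show ?thesis
    using japanese_pos[of y] by (simp add: divide_le_eq)
qed

lemma power2_japanese_powr: "(japanese x powr t)^2 = japanese x powr (2 * t)"
  by (simp add: power2_eq_square powr_add[symmetric] japanese_pos)

lemma power_le_exp:
  assumes "0 \<le> y" "0 < n"
  shows "y ^ n \<le> real n ^ n * exp y"
proof -
  have "(y / real n) ^ n \<le> (1 + y / real n) ^ n"
    using assms by (intro power_mono) auto
  also have "\<dots> \<le> exp y"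
    using assms by (intro exp_ge_one_plus_x_over_n_power_n) auto
  finally show ?thesis
    using assms by (simp add: power_divide field_simps)
qed

lemma japanese_power_mult_gauss_bounded:
  assumes "0 < p"
  shows "\<exists>M. \<forall>x. japanese x ^ N * exp (- p * x^2 / 2) \<le> M"
proof (intro exI allI)
  fix x :: real
  define n where "n = Suc N"
  define y where "y = p * (1 + x^2) / 2"
  have "japanese x ^ N \<le> japanese x ^ (2 * n)"
    using japanese_ge_1 by (intro power_increasing) (auto simp: n_def)
  also have "\<dots> = (japanese x ^ 2) ^ n"
    by (simp add: power_mult)
  also have "\<dots> \<le> (2 * (1 + x^2)) ^ n"
  proof (intro power_mono)
    show "japanese x ^ 2 \<le> 2 * (1 + x^2)"
      using zero_le_power2[of "\<bar>x\<bar> - 1"] unfolding japanese_def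
      by (simp add: power2_eq_square algebra_simps)
  qed (simp add: japanese_def)
  also have "2 * (1 + x^2) = (4 / p) * y"
    using assms by (simp add: y_def)
  also have "((4 / p) * y) ^ n = (4 / p) ^ n * y ^ n"
    by (rule power_mult_distrib)
  also have "\<dots> \<le> (4 / p) ^ n * (real n ^ n * exp y)"
    using assms by (intro mult_left_mono power_le_exp) (auto simp: n_def y_def)
  finally have "japanese x ^ N * exp (- p * x^2 / 2)
      \<le> (4 / p) ^ n * (real n ^ n * exp y) * exp (- p * x^2 / 2)"
    by (rule mult_right_mono) simp
  also have "\<dots> = (4 / p) ^ n * real n ^ n * (exp y * exp (- p * x^2 / 2))"
    by (simp only: mult.assoc)
  also have "exp y * exp (- p * x^2 / 2) = exp (p / 2)"
    by (simp add: y_def exp_add[symmetric] algebra_simps)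
  finally show "japanese x ^ N * exp (- p * x^2 / 2) \<le> (4 / p) ^ n * real n ^ n * exp (p / 2)" .
qed

lemma japanese_powr_mult_gauss_bounded:
  assumes "0 \<le> N"
  obtains M where "0 < M" "\<And>x. japanese x powr N * exp (- (x^2) / 2) \<le> M"
proof -
  obtain M where M: "\<And>x. japanese x ^ nat \<lceil>N\<rceil> * exp (- (x^2) / 2) \<le> M"
    using japanese_power_mult_gauss_bounded[of 1 "nat \<lceil>N\<rceil>"] by auto
  have "japanese x powr N * exp (- (x^2) / 2) \<le> M" for x
  proof -
    have "japanese x powr N \<le> japanese x powr (real (nat \<lceil>N\<rceil>))"
      using japanese_ge_1[of x] assms by (intro powr_mono) auto
    also have "\<dots> = japanese x ^ nat \<lceil>N\<rceil>"
      using japanese_pos[of x] by (simp add: powr_realpow)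
    finally have "japanese x powr N * exp (- (x^2) / 2) \<le> japanese x ^ nat \<lceil>N\<rceil> * exp (- (x^2) / 2)"
      by (rule mult_right_mono) simp
    then show ?thesis
      using M[of x] by linarith
  qed
  moreover have "1 \<le> M"
    using M[of 0] by (simp add: japanese_def)
  ultimately show thesis
    by (intro that[of M]) simp_all
qed

lemma abs_power_le_japanese_cube: "k \<le> 3 \<Longrightarrow> \<bar>u\<bar> ^ k \<le> japanese u ^ 3"
  using abs_le_japanese[of u] japanese_ge_1[of u]
  by (meson abs_ge_zero order_trans power_increasing power_mono)

lemma powr_le_powr_abs:
  fixes x y :: real
  assumes "1 \<le> x" "1 \<le> y" "r \<le> 0 \<or> x \<le> y"
  shows "x powr r \<le> y powr \<bar>r\<bar>"
proof (cases "r \<le> 0")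
  case True
  then have "x powr r \<le> 1"
    using powr_mono[of r 0 x] assms(1) by simp
  also have "1 \<le> y powr \<bar>r\<bar>"
    using assms(2) by (simp add: ge_one_powr_ge_zero)
  finally show ?thesis .
next
  case False
  then show ?thesis
    using assms by (simp add: powr_mono2)
qed

lemma powr_min_0_le:
  fixes x R :: real
  assumes "1 \<le> x" "x \<le> R"
  shows "R powr (min 0 e) \<le> x powr e"
proof (cases "0 \<le> e")
  case True
  then show ?thesis
    using assms by (simp add: ge_one_powr_ge_zero)
next
  case False
  then show ?thesis
    using assms by (simp add: powr_mono2')
qed

section \<open>Gaussians times polynomials on the line\<close>

definition gauss_wave :: "real \<Rightarrow> real \<Rightarrow> complex \<Rightarrow> complex" where
  "gauss_wave p q z = exp (- of_real p * z^2 / 2 + \<i> * of_real q * z)"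

definition poly_gauss :: "complex poly \<Rightarrow> real \<Rightarrow> real \<Rightarrow> real \<Rightarrow> complex" where
  "poly_gauss P p q x = poly P (of_real x) * gauss_wave p q (of_real x)"

definition gauss_pderiv :: "real \<Rightarrow> real \<Rightarrow> complex poly \<Rightarrow> complex poly" where
  "gauss_pderiv p q P = pderiv P + P * [:\<i> * of_real q, - of_real p:]"

lemma has_field_derivative_gauss_wave:
  "(gauss_wave p q has_field_derivative (\<i> * of_real q - of_real p * z) * gauss_wave p q z) (at z)"
  unfolding gauss_wave_def
  by (auto intro!: derivative_eq_intros simp: algebra_simps power2_eq_square)

lemma has_vector_derivative_poly_gauss:
  "(poly_gauss P p q has_vector_derivative poly_gauss (gauss_pderiv p q P) p q x) (at x within S)"
proof -
  have "((\<lambda>z. poly P z * gauss_wave p q z) has_field_derivative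
      poly (gauss_pderiv p q P) z * gauss_wave p q z) (at z)" for z
    by (auto intro!: derivative_eq_intros has_field_derivative_gauss_wave[THEN DERIV_chain2]
        simp: gauss_pderiv_def algebra_simps)
  from has_vector_derivative_real_field[OF this[of "of_real x"]] show ?thesis
    unfolding poly_gauss_def[abs_def] .
qed

lemma norm_gauss_wave_of_real: "cmod (gauss_wave p q (of_real x)) = exp (- p * x^2 / 2)"
  unfolding gauss_wave_def norm_exp_eq_Re by simp

lemma gauss_wave_of_real:
  "gauss_wave p q (of_real x) = of_real (exp (- p * x^2 / 2)) * exp (\<i> * of_real (q * x))"
proof -
  have "gauss_wave p q (of_real x) = exp (of_real (- p * x^2 / 2) + \<i> * of_real (q * x))"
    unfolding gauss_wave_def by (simp add: algebra_simps)
  then show ?thesis by (simp only: exp_add exp_of_real)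
qed

lemma poly_gauss_mult_exp:
  "poly_gauss P p q x * exp (- \<i> * of_real (\<xi> * x)) = poly_gauss P p (q - \<xi>) x"
proof -
  have "gauss_wave p q (of_real x) * exp (- \<i> * of_real (\<xi> * x)) = gauss_wave p (q - \<xi>) (of_real x)"
    unfolding gauss_wave_def exp_add[symmetric] by (simp add: algebra_simps)
  then show ?thesis unfolding poly_gauss_def by (simp add: mult.assoc)
qed

lemma poly_gauss_one: "poly_gauss 1 p q = (\<lambda>x. gauss_wave p q (of_real x))"
  by (simp add: poly_gauss_def[abs_def])

lemma continuous_on_poly_gauss: "continuous_on UNIV (poly_gauss P p q)"
  unfolding poly_gauss_def[abs_def] gauss_wave_def by (intro continuous_intros) auto

lemma borel_measurable_poly_gauss[measurable]: "poly_gauss P p q \<in> borel_measurable borel"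
  by (rule borel_measurable_continuous_onI[OF continuous_on_poly_gauss])

lemma norm_poly_le_japanese_power: "\<exists>C N. \<forall>x. cmod (poly P (of_real x)) \<le> C * japanese x ^ N"
proof (induction P rule: pCons_induct)
  case 0
  then show ?case by (intro exI[of _ 0]) auto
next
  case (pCons a P)
  then obtain C N where CN: "\<And>x. cmod (poly P (of_real x)) \<le> C * japanese x ^ N"
    by blast
  have "0 \<le> C"
    using order_trans[OF norm_ge_zero CN[of 0]] by (simp add: japanese_def)
  show ?case
  proof (intro exI allI)
    fix x :: real
    have "cmod (poly (pCons a P) (of_real x)) \<le> cmod a + \<bar>x\<bar> * cmod (poly P (of_real x))"
      by (simp add: norm_mult norm_triangle_ineq[THEN order_trans])
    also have "\<dots> \<le> cmod a * japanese x ^ Suc N + japanese x * (C * japanese x ^ N)"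
    proof (intro add_mono mult_mono)
      have "1 \<le> japanese x ^ Suc N"
        using japanese_ge_1 by (rule one_le_power)
      then show "cmod a \<le> cmod a * japanese x ^ Suc N"
        by (metis mult.right_neutral mult_left_mono norm_ge_zero)
    qed (use CN abs_le_japanese less_imp_le[OF japanese_pos] \<open>0 \<le> C\<close> in auto)
    also have "\<dots> = (cmod a + C) * japanese x ^ Suc N"
      by (simp add: algebra_simps)
    finally show "cmod (poly (pCons a P) (of_real x)) \<le> (cmod a + C) * japanese x ^ Suc N" .
  qed
qed

lemma norm_poly_gauss_le:
  assumes "0 < p"
  obtains C N where "0 \<le> C" and
    "\<And>x. cmod (poly_gauss P p q x) \<le> C * (japanese x ^ N * exp (- p * x^2 / 2))"
proof -
  obtain C N where CN: "\<And>x. cmod (poly P (of_real x)) \<le> C * japanese x ^ N"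
    using norm_poly_le_japanese_power by blast
  have "cmod (poly_gauss P p q x) \<le> C * (japanese x ^ N * exp (- p * x^2 / 2))" for x
    using mult_right_mono[OF CN[of x] exp_ge_zero]
    by (simp add: poly_gauss_def norm_mult norm_gauss_wave_of_real mult.assoc)
  moreover have "0 \<le> C"
    using order_trans[OF norm_ge_zero CN[of 0]] by (simp add: japanese_def)
  ultimately show thesis by (rule that[rotated])
qed

lemma poly_gauss_decay:
  assumes "0 < p"
  shows "\<exists>M. \<forall>x. \<bar>x\<bar> ^ j * cmod (poly_gauss P p q x) \<le> M"
proof -
  obtain C N where "0 \<le> C" and CN:
    "\<And>x. cmod (poly_gauss P p q x) \<le> C * (japanese x ^ N * exp (- p * x^2 / 2))"
    using norm_poly_gauss_le[OF assms] by blast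
  obtain M where M: "\<And>x. japanese x ^ (j + N) * exp (- p * x^2 / 2) \<le> M"
    using japanese_power_mult_gauss_bounded[OF assms] by blast
  have "\<bar>x\<bar> ^ j * cmod (poly_gauss P p q x) \<le> C * M" for x
  proof -
    have "\<bar>x\<bar> ^ j * cmod (poly_gauss P p q x) \<le> japanese x ^ j * (C * (japanese x ^ N * exp (- p * x^2 / 2)))"
      using abs_le_japanese CN less_imp_le[OF japanese_pos[of x]]
      by (intro mult_mono power_mono zero_le_power) auto
    also have "\<dots> = C * (japanese x ^ (j + N) * exp (- p * x^2 / 2))"
      by (simp add: power_add algebra_simps)
    also have "\<dots> \<le> C * M"
      using M \<open>0 \<le> C\<close> by (rule mult_left_mono)
    finally show ?thesis .
  qed
  then show ?thesis by blast
qed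

lemma norm_poly_gauss_le_gauss:
  assumes "0 < p"
  shows "\<exists>M. \<forall>x. cmod (poly_gauss P p q x) \<le> M * exp (- (p / 4) * x^2)"
proof -
  obtain C N where "0 \<le> C" and CN:
    "\<And>x. cmod (poly_gauss P p q x) \<le> C * (japanese x ^ N * exp (- p * x^2 / 2))"
    using norm_poly_gauss_le[OF assms] by blast
  obtain M where M: "\<And>x. japanese x ^ N * exp (- (p / 2) * x^2 / 2) \<le> M"
    using japanese_power_mult_gauss_bounded[of "p / 2" N] assms by auto
  have "cmod (poly_gauss P p q x) \<le> C * M * exp (- (p / 4) * x^2)" for x
  proof -
    have "exp (- p * x^2 / 2) = exp (- (p / 2) * x^2 / 2) * exp (- (p / 4) * x^2)"
      by (simp add: exp_add[symmetric] field_simps)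
    then have "C * (japanese x ^ N * exp (- p * x^2 / 2))
        = C * (japanese x ^ N * exp (- (p / 2) * x^2 / 2)) * exp (- (p / 4) * x^2)"
      by (simp only: mult.assoc)
    also have "\<dots> \<le> C * M * exp (- (p / 4) * x^2)"
      using M \<open>0 \<le> C\<close> by (intro mult_right_mono mult_left_mono) auto
    finally show ?thesis using CN[of x] by linarith
  qed
  then show ?thesis by blast
qed

lemma integrable_exp_neg_square:
  assumes "0 < c"
  shows "integrable lborel (\<lambda>x::real. exp (- c * x^2))"
proof -
  define \<sigma> where "\<sigma> = sqrt (1 / (2 * c))"
  have \<sigma>_pos: "0 < \<sigma>" and \<sigma>_sq: "2 * \<sigma>^2 = 1 / c"
    using assms by (auto simp: \<sigma>_def)
  have "integrable lborel (\<lambda>x. sqrt (2 * pi * \<sigma>^2) * normal_density 0 \<sigma> x)"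
    by (intro integrable_mult_right integrable_normal_density \<sigma>_pos)
  also have "(\<lambda>x. sqrt (2 * pi * \<sigma>^2) * normal_density 0 \<sigma> x) = (\<lambda>x. exp (- c * x^2))"
  proof
    fix x :: real
    have "sqrt (2 * pi * \<sigma>^2) * normal_density 0 \<sigma> x = exp (- (x^2) / (2 * \<sigma>^2))"
      using \<sigma>_pos by (simp add: normal_density_def)
    also have "- (x^2) / (2 * \<sigma>^2) = - c * x^2"
      by (subst \<sigma>_sq) simp
    finally show "sqrt (2 * pi * \<sigma>^2) * normal_density 0 \<sigma> x = exp (- c * x^2)" .
  qed
  finally show ?thesis .
qed

lemma integrable_poly_gauss:
  assumes "0 < p"
  shows "integrable lborel (poly_gauss P p q)"
proof -
  obtain M where M: "\<And>x. cmod (poly_gauss P p q x) \<le> M * exp (- (p / 4) * x^2)"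
    using norm_poly_gauss_le_gauss[OF assms] by blast
  show ?thesis
  proof (rule Bochner_Integration.integrable_bound)
    show "integrable lborel (\<lambda>x. M * exp (- (p / 4) * x^2))"
      using assms by (intro integrable_mult_right integrable_exp_neg_square) auto
    show "AE x in lborel. norm (poly_gauss P p q x) \<le> norm (M * exp (- (p / 4) * x^2))"
      using M by (auto intro: order_trans[OF _ abs_ge_self])
  qed simp
qed

lemma poly_gauss_tendsto_0:
  assumes "0 < p"
  shows "(poly_gauss P p q \<longlongrightarrow> 0) at_top" "(poly_gauss P p q \<longlongrightarrow> 0) at_bot"
proof -
  obtain M where M: "\<And>x. \<bar>x\<bar> ^ 1 * cmod (poly_gauss P p q x) \<le> M"
    using poly_gauss_decay[OF assms] by blast
  have le: "norm (poly_gauss P p q x) \<le> M / \<bar>x\<bar>" if "x \<noteq> 0" for x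
    using M[of x] that by (simp add: field_simps)
  have "eventually (\<lambda>x. norm (poly_gauss P p q x) \<le> M / \<bar>x\<bar>) at_top"
    using eventually_gt_at_top[of 0] by eventually_elim (rule le, simp)
  moreover have "((\<lambda>x. M / \<bar>x\<bar>) \<longlongrightarrow> 0) at_top"
    by real_asymp
  ultimately show "(poly_gauss P p q \<longlongrightarrow> 0) at_top"
    by (rule Lim_null_comparison)
  have "eventually (\<lambda>x. norm (poly_gauss P p q x) \<le> M / \<bar>x\<bar>) at_bot"
    using eventually_at_bot_not_equal[of 0] by eventually_elim (rule le)
  moreover have "((\<lambda>x. M / \<bar>x\<bar>) \<longlongrightarrow> 0) at_bot"
    by real_asymp
  ultimately show "(poly_gauss P p q \<longlongrightarrow> 0) at_bot"
    by (rule Lim_null_comparison)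
qed

lemma integral_poly_gauss_gauss_pderiv:
  assumes "0 < p"
  shows "integral\<^sup>L lborel (poly_gauss (gauss_pderiv p q P) p q) = 0"
proof -
  have "(LBINT x=-\<infinity>..\<infinity>. poly_gauss (gauss_pderiv p q P) p q x) = 0 - 0"
  proof (rule interval_integral_FTC_integrable)
    show "isCont (poly_gauss (gauss_pderiv p q P) p q) x" for x
      using continuous_on_poly_gauss by (simp add: continuous_on_eq_continuous_at)
    show "set_integrable lborel (einterval (- \<infinity>) \<infinity>) (poly_gauss (gauss_pderiv p q P) p q)"
      using integrable_poly_gauss[OF assms] by (simp add: set_integrable_def)
    show "((poly_gauss P p q \<circ> real_of_ereal) \<longlongrightarrow> 0) (at_right (- \<infinity>))"
      "((poly_gauss P p q \<circ> real_of_ereal) \<longlongrightarrow> 0) (at_left \<infinity>)"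
      unfolding ereal_tendsto_simps1 by (rule poly_gauss_tendsto_0[OF assms])+
  qed (auto intro: has_vector_derivative_poly_gauss)
  then show ?thesis
    by (simp add: interval_lebesgue_integral_def set_lebesgue_integral_def)
qed

lemma integral_gauss_char:
  "(\<integral>x. of_real (exp (- (x^2) / 2)) * exp (\<i> * of_real (\<theta> * x)) \<partial>lborel)
    = complex_of_real (sqrt (2 * pi) * exp (- (\<theta>^2) / 2))"
proof -
  have "(\<integral>x. std_normal_density x *\<^sub>R exp (\<i> * of_real (\<theta> * x)) \<partial>lborel)
      = char std_normal_distribution \<theta>"
    unfolding char_def by (subst integral_density) auto
  also have "\<dots> = of_real (exp (- (\<theta>^2) / 2))"
    by (simp add: char_std_normal_distribution)
  finally have char: "(\<integral>x. std_normal_density x *\<^sub>R exp (\<i> * of_real (\<theta> * x)) \<partial>lborel)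
      = of_real (exp (- (\<theta>^2) / 2))" .
  have density: "(\<lambda>x. of_real (exp (- (x^2) / 2)) * exp (\<i> * of_real (\<theta> * x)))
      = (\<lambda>x. of_real (sqrt (2 * pi)) * (std_normal_density x *\<^sub>R exp (\<i> * of_real (\<theta> * x))))"
    by (auto simp: std_normal_density_def scaleR_conv_of_real)
  show ?thesis
    unfolding density integral_mult_right_zero char by simp
qed

lemma integral_gauss_wave:
  assumes "0 < p"
  shows "(\<integral>x. gauss_wave p q (of_real x) \<partial>lborel)
    = of_real (sqrt (2 * pi / p) * exp (- (q^2) / (2 * p)))"
proof -
  define c where "c = 1 / sqrt p"
  have "c \<noteq> 0"
    using assms by (simp add: c_def)
  have "(\<integral>x. gauss_wave p q (of_real x) \<partial>lborel)
      = \<bar>c\<bar> *\<^sub>R (\<integral>x. gauss_wave p q (of_real (0 + c * x)) \<partial>lborel)"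
    by (rule lborel_integral_real_affine[OF \<open>c \<noteq> 0\<close>])
  also have "(\<lambda>x. gauss_wave p q (of_real (0 + c * x)))
      = (\<lambda>x. of_real (exp (- (x^2) / 2)) * exp (\<i> * of_real ((q * c) * x)))"
  proof
    fix x :: real
    have "p * (c * x)^2 = x^2"
      using assms by (simp add: c_def power_mult_distrib power_divide)
    then show "gauss_wave p q (of_real (0 + c * x))
        = of_real (exp (- (x^2) / 2)) * exp (\<i> * of_real ((q * c) * x))"
      unfolding gauss_wave_of_real by (simp add: mult.assoc)
  qed
  also have "(\<integral>x. of_real (exp (- (x^2) / 2)) * exp (\<i> * of_real ((q * c) * x)) \<partial>lborel)
      = of_real (sqrt (2 * pi) * exp (- ((q * c)^2) / 2))"
    by (rule integral_gauss_char)
  finally show ?thesis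
    using assms by (simp add: c_def scaleR_conv_of_real power_mult_distrib real_sqrt_divide field_simps)
qed

text \<open>The Fourier transform turns \<open>d/dx\<close> into multiplication by \<open>\<i> * \<xi>\<close>; the modulation
  \<open>exp (- \<i> * \<xi> * x)\<close> is absorbed into the Gaussian as the shift \<open>q - \<xi>\<close>.\<close>

lemma integral_poly_gauss_pderiv_shift:
  assumes "0 < p"
  shows "integral\<^sup>L lborel (poly_gauss (gauss_pderiv p q 1) p (q - \<xi>))
    = \<i> * of_real \<xi> * integral\<^sup>L lborel (poly_gauss 1 p (q - \<xi>))"
proof -
  have "poly_gauss (gauss_pderiv p q 1) p (q - \<xi>)
      = (\<lambda>x. poly_gauss (gauss_pderiv p (q - \<xi>) 1) p (q - \<xi>) x + \<i> * of_real \<xi> * poly_gauss 1 p (q - \<xi>) x)"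
    by (auto simp: poly_gauss_def gauss_pderiv_def algebra_simps)
  then show ?thesis
    using integrable_poly_gauss[OF assms] integral_poly_gauss_gauss_pderiv[OF assms]
    by simp
qed

section \<open>Tensor products and the wave packets\<close>

definition tensor :: "(real \<Rightarrow> complex) \<Rightarrow> (real \<Rightarrow> complex) \<Rightarrow> real \<times> real \<Rightarrow> complex" where
  "tensor f g z = f (fst z) * g (snd z)"

lemma dx_tensor:
  assumes "\<And>x. (f has_vector_derivative f' x) (at x)"
  shows "dx (tensor f g) = tensor f' g"
proof (intro ext, clarify)
  fix x t :: real
  have "((\<lambda>y. f y * g t) has_vector_derivative f' x * g t) (at x)"
    by (intro has_vector_derivative_mult_left assms)
  then show "dx (tensor f g) (x, t) = tensor f' g (x, t)"
    unfolding dx_def tensor_def by (simp add: vector_derivative_at)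
qed

lemma dt_tensor:
  assumes "\<And>t. (g has_vector_derivative g' t) (at t)"
  shows "dt (tensor f g) = tensor f g'"
proof (intro ext, clarify)
  fix x t :: real
  have "((\<lambda>y. f x * g y) has_vector_derivative f x * g' t) (at t)"
    by (intro has_vector_derivative_mult_right assms)
  then show "dt (tensor f g) (x, t) = tensor f g' (x, t)"
    unfolding dt_def tensor_def by (simp add: vector_derivative_at)
qed

lemma pderiv_word_tensor_poly_gauss:
  "\<exists>Q1 Q2. pderiv_word ds (tensor (poly_gauss P1 p1 q1) (poly_gauss P2 p2 q2))
     = tensor (poly_gauss Q1 p1 q1) (poly_gauss Q2 p2 q2)"
proof (induction ds)
  case Nil
  then show ?case by auto
next
  case (Cons d ds)
  then obtain Q1 Q2 where "pderiv_word ds (tensor (poly_gauss P1 p1 q1) (poly_gauss P2 p2 q2))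
      = tensor (poly_gauss Q1 p1 q1) (poly_gauss Q2 p2 q2)"
    by blast
  then show ?case
    by (cases d) (auto simp: dx_tensor[OF has_vector_derivative_poly_gauss]
        dt_tensor[OF has_vector_derivative_poly_gauss])
qed

lemma tensor_poly_gauss_decay:
  assumes "0 < p1" "0 < p2"
  shows "\<exists>M. \<forall>x t. \<bar>x\<bar> ^ j * \<bar>t\<bar> ^ k
    * cmod (tensor (poly_gauss P1 p1 q1) (poly_gauss P2 p2 q2) (x, t)) \<le> M"
proof -
  obtain M1 where M1: "\<And>x. \<bar>x\<bar> ^ j * cmod (poly_gauss P1 p1 q1 x) \<le> M1"
    using poly_gauss_decay[OF assms(1)] by blast
  obtain M2 where M2: "\<And>t. \<bar>t\<bar> ^ k * cmod (poly_gauss P2 p2 q2 t) \<le> M2"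
    using poly_gauss_decay[OF assms(2)] by blast
  have "\<bar>x\<bar> ^ j * \<bar>t\<bar> ^ k * cmod (tensor (poly_gauss P1 p1 q1) (poly_gauss P2 p2 q2) (x, t))
      = (\<bar>x\<bar> ^ j * cmod (poly_gauss P1 p1 q1 x)) * (\<bar>t\<bar> ^ k * cmod (poly_gauss P2 p2 q2 t))" for x t
    by (simp add: tensor_def norm_mult)
  also have "\<dots> x t \<le> M1 * M2" for x t
    by (intro mult_mono M1 M2) (auto intro: order_trans[OF _ M1[of 0]])
  finally show ?thesis
    by blast
qed

lemma tensor_poly_gauss_in_schwartz:
  assumes "0 < p1" "0 < p2"
  shows "tensor (poly_gauss P1 p1 q1) (poly_gauss P2 p2 q2) \<in> schwartz"
proof -
  have continuous: "continuous_on UNIV (tensor (poly_gauss Q1 p1 q1) (poly_gauss Q2 p2 q2))" for Q1 Q2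
    unfolding tensor_def
    by (intro continuous_on_mult continuous_on_compose2[OF continuous_on_poly_gauss]
        continuous_intros) auto
  have differentiable:
    "(\<lambda>y. tensor (poly_gauss Q1 p1 q1) (poly_gauss Q2 p2 q2) (y, t)) differentiable at x"
    "(\<lambda>y. tensor (poly_gauss Q1 p1 q1) (poly_gauss Q2 p2 q2) (x, y)) differentiable at t"
    for Q1 Q2 x t
    unfolding tensor_def
    by (auto intro!: differentiableI_vector has_vector_derivative_mult_left
        has_vector_derivative_mult_right has_vector_derivative_poly_gauss)
  show ?thesis
    unfolding schwartz_def
  proof (intro CollectI allI conjI)
    fix ds
    obtain Q1 Q2 where Q: "pderiv_word ds (tensor (poly_gauss P1 p1 q1) (poly_gauss P2 p2 q2))
        = tensor (poly_gauss Q1 p1 q1) (poly_gauss Q2 p2 q2)"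
      using pderiv_word_tensor_poly_gauss by blast
    show "continuous_on UNIV (pderiv_word ds (tensor (poly_gauss P1 p1 q1) (poly_gauss P2 p2 q2)))"
      unfolding Q by (rule continuous)
    show "(\<lambda>y. pderiv_word ds (tensor (poly_gauss P1 p1 q1) (poly_gauss P2 p2 q2)) (y, t))
        differentiable at x"
      "(\<lambda>y. pderiv_word ds (tensor (poly_gauss P1 p1 q1) (poly_gauss P2 p2 q2)) (x, y))
        differentiable at t" for x t
      unfolding Q by (rule differentiable)+
    show "\<exists>M. \<forall>x t. \<bar>x\<bar> ^ j * \<bar>t\<bar> ^ k
        * cmod (pderiv_word ds (tensor (poly_gauss P1 p1 q1) (poly_gauss P2 p2 q2)) (x, t)) \<le> M"
      for j k
      unfolding Q using assms by (rule tensor_poly_gauss_decay)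
  qed
qed

lemma integral_tensor:
  assumes f: "integrable lborel f" and g: "integrable lborel g"
  shows "(\<integral>z. tensor f g z \<partial>lborel) = integral\<^sup>L lborel f * integral\<^sup>L lborel g"
proof -
  have [measurable]: "f \<in> borel_measurable borel" "g \<in> borel_measurable borel"
    using borel_measurable_integrable[OF f] borel_measurable_integrable[OF g] by auto
  have int: "integrable (lborel \<Otimes>\<^sub>M lborel) (\<lambda>(x, y). f x * g y)"
  proof (rule lborel_pair.Fubini_integrable)
    show "(\<lambda>(x, y). f x * g y) \<in> borel_measurable (lborel \<Otimes>\<^sub>M lborel)"
      by measurable
    have "integrable lborel (\<lambda>x. norm (f x) * (\<integral>y. norm (g y) \<partial>lborel))"
      using f by (intro integrable_mult_left integrable_norm)
    then show "integrable lborel (\<lambda>x. \<integral>y. norm (case (x, y) of (x, y) \<Rightarrow> f x * g y) \<partial>lborel)"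
      by (simp add: norm_mult)
    show "AE x in lborel. integrable lborel (\<lambda>y. case (x, y) of (x, y) \<Rightarrow> f x * g y)"
      using g by (auto intro!: integrable_mult_right)
  qed
  have "(\<integral>z. tensor f g z \<partial>lborel) = (\<integral>z. (\<lambda>(x, y). f x * g y) z \<partial>(lborel \<Otimes>\<^sub>M lborel))"
    by (simp add: lborel_prod split_beta' tensor_def)
  also have "\<dots> = (\<integral>x. (\<integral>y. f x * g y \<partial>lborel) \<partial>lborel)"
    using lborel_pair.integral_fst[OF int] by simp
  also have "\<dots> = integral\<^sup>L lborel f * integral\<^sup>L lborel g"
    by simp
  finally show ?thesis .
qed

lemma fourier2_tensor_poly_gauss:
  assumes "0 < p1" "0 < p2"
  shows "fourier2 (tensor (poly_gauss P1 p1 q1) (poly_gauss P2 p2 q2)) (\<xi>, \<tau>)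
    = integral\<^sup>L lborel (poly_gauss P1 p1 (q1 - \<xi>)) * integral\<^sup>L lborel (poly_gauss P2 p2 (q2 - \<tau>))"
proof -
  have "(\<lambda>z. tensor (poly_gauss P1 p1 q1) (poly_gauss P2 p2 q2) z
        * exp (- \<i> * of_real (\<xi> * fst z + \<tau> * snd z)))
      = tensor (poly_gauss P1 p1 (q1 - \<xi>)) (poly_gauss P2 p2 (q2 - \<tau>))"
  proof
    fix z :: "real \<times> real"
    have "exp (- \<i> * of_real (\<xi> * fst z + \<tau> * snd z))
        = exp (- \<i> * of_real (\<xi> * fst z)) * exp (- \<i> * of_real (\<tau> * snd z))"
      unfolding exp_add[symmetric] by (simp add: algebra_simps)
    then show "tensor (poly_gauss P1 p1 q1) (poly_gauss P2 p2 q2) z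
        * exp (- \<i> * of_real (\<xi> * fst z + \<tau> * snd z))
      = tensor (poly_gauss P1 p1 (q1 - \<xi>)) (poly_gauss P2 p2 (q2 - \<tau>)) z"
      unfolding tensor_def poly_gauss_mult_exp[symmetric] by (simp add: ac_simps)
  qed
  then show ?thesis
    unfolding fourier2_def using assms by (simp add: integral_tensor integrable_poly_gauss)
qed

text \<open>The Fourier transform of \<open>wave_packet a c\<close> is a Gaussian of width \<open>a\<^sup>-\<^sup>2\<close> around
  \<open>\<xi> = a\<close> and of width \<open>1\<close> around \<open>\<tau> = c\<close>.\<close>

definition wave_packet :: "real \<Rightarrow> real \<Rightarrow> real \<times> real \<Rightarrow> complex" where
  "wave_packet a c = tensor (poly_gauss 1 (1 / a^4) a) (poly_gauss 1 1 c)"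

lemma wave_packet_in_schwartz: "0 < a \<Longrightarrow> wave_packet a c \<in> schwartz"
  unfolding wave_packet_def by (rule tensor_poly_gauss_in_schwartz) auto

lemma norm_fourier2_wave_packet:
  assumes "0 < a"
  shows "cmod (fourier2 (wave_packet a c) (\<xi>, \<tau>))
    = 2 * pi * a^2 * exp (- ((a^2 * (\<xi> - a))^2) / 2) * exp (- ((\<tau> - c)^2) / 2)"
proof -
  have p: "0 < 1 / a^4"
    using assms by simp
  have "fourier2 (wave_packet a c) (\<xi>, \<tau>)
      = integral\<^sup>L lborel (poly_gauss 1 (1 / a^4) (a - \<xi>)) * integral\<^sup>L lborel (poly_gauss 1 1 (c - \<tau>))"
    unfolding wave_packet_def using p by (simp add: fourier2_tensor_poly_gauss)
  also have "\<dots> = of_real (sqrt (2 * pi / (1 / a^4)) * exp (- ((a - \<xi>)^2) / (2 * (1 / a^4))))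
        * of_real (sqrt (2 * pi / 1) * exp (- ((c - \<tau>)^2) / (2 * 1)))"
    by (simp only: poly_gauss_one integral_gauss_wave[OF p] integral_gauss_wave[OF zero_less_one])
  also have "\<dots> = of_real (2 * pi * a^2 * exp (- ((a^2 * (\<xi> - a))^2) / 2) * exp (- ((\<tau> - c)^2) / 2))"
  proof -
    have "sqrt (a^4) = a^2"
      using real_sqrt_abs[of "a^2"] by (simp flip: power_mult)
    have "sqrt (2 * pi / (1 / a^4)) * sqrt (2 * pi / 1) = (sqrt (2 * pi) * sqrt (2 * pi)) * sqrt (a^4)"
      by (simp add: real_sqrt_mult)
    also have "\<dots> = 2 * pi * a^2"
      using \<open>sqrt (a^4) = a^2\<close> by simp
    finally have sq: "sqrt (2 * pi / (1 / a^4)) * sqrt (2 * pi / 1) = 2 * pi * a^2" .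
    have e1: "- ((a - \<xi>)^2) / (2 * (1 / a^4)) = - ((a^2 * (\<xi> - a))^2) / 2"
      by (simp add: power_mult_distrib power_mult[symmetric] power2_commute)
    have e2: "- ((c - \<tau>)^2) / (2 * 1) = - ((\<tau> - c)^2) / 2"
      by (simp add: power2_commute)
    show ?thesis
      unfolding e1 e2 of_real_mult[symmetric] sq[symmetric] by (simp only: mult_ac)
  qed
  finally have "fourier2 (wave_packet a c) (\<xi>, \<tau>)
      = of_real (2 * pi * a^2 * exp (- ((a^2 * (\<xi> - a))^2) / 2) * exp (- ((\<tau> - c)^2) / 2))" .
  then show ?thesis
    by (simp only: norm_of_real abs_mult abs_exp_cancel abs_power2 abs_numeral abs_of_pos[OF pi_gt_zero])
qed

lemma norm_fourier2_dx_wave_packet: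
  assumes "0 < a"
  shows "cmod (fourier2 (dx (wave_packet a c)) z) = \<bar>fst z\<bar> * cmod (fourier2 (wave_packet a c) z)"
proof (cases z)
  case (Pair \<xi> \<tau>)
  have p: "0 < 1 / a^4"
    using assms by simp
  have "dx (wave_packet a c) = tensor (poly_gauss (gauss_pderiv (1 / a^4) a 1) (1 / a^4) a) (poly_gauss 1 1 c)"
    unfolding wave_packet_def by (rule dx_tensor[OF has_vector_derivative_poly_gauss])
  then have "fourier2 (dx (wave_packet a c)) (\<xi>, \<tau>)
      = integral\<^sup>L lborel (poly_gauss (gauss_pderiv (1 / a^4) a 1) (1 / a^4) (a - \<xi>))
        * integral\<^sup>L lborel (poly_gauss 1 1 (c - \<tau>))"
    using p by (simp add: fourier2_tensor_poly_gauss)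
  also have "\<dots> = \<i> * of_real \<xi> * (integral\<^sup>L lborel (poly_gauss 1 (1 / a^4) (a - \<xi>))
        * integral\<^sup>L lborel (poly_gauss 1 1 (c - \<tau>)))"
    using p by (simp add: integral_poly_gauss_pderiv_shift)
  also have "integral\<^sup>L lborel (poly_gauss 1 (1 / a^4) (a - \<xi>)) * integral\<^sup>L lborel (poly_gauss 1 1 (c - \<tau>))
      = fourier2 (wave_packet a c) (\<xi>, \<tau>)"
    unfolding wave_packet_def using p by (simp add: fourier2_tensor_poly_gauss)
  finally show ?thesis
    using Pair by (simp add: norm_mult)
qed

section \<open>The phase function on the packet\<close>

lemma phi_diff_le:
  assumes "1 \<le> a"
  shows "\<bar>phi \<alpha> \<beta> a - phi \<alpha> \<beta> \<xi>\<bar> \<le> (7 * \<bar>\<alpha>\<bar> + \<bar>\<beta>\<bar>) * japanese (a^2 * (\<xi> - a)) ^ 3"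
proof -
  define d where "d = \<xi> - a"
  define u where "u = a^2 * d"
  define J where "J = japanese u"
  have "1 * \<bar>d\<bar> \<le> a^2 * \<bar>d\<bar>" "a * d^2 \<le> a^4 * d^2" "1 * \<bar>d\<bar>^3 \<le> a^6 * \<bar>d\<bar>^3"
    using assms power_increasing[of 1 4 a] by (intro mult_right_mono one_le_power; simp)+
  moreover have "\<bar>u\<bar> = a^2 * \<bar>d\<bar>" "\<bar>u\<bar>^2 = a^4 * d^2" "\<bar>u\<bar>^3 = a^6 * \<bar>d\<bar>^3"
    by (simp_all add: u_def abs_mult power_mult_distrib flip: power_mult)
  ultimately have "\<bar>d\<bar> \<le> \<bar>u\<bar>" "\<bar>a * d^2\<bar> \<le> \<bar>u\<bar>^2" "\<bar>d\<bar>^3 \<le> \<bar>u\<bar>^3"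
    using assms by (simp_all add: abs_mult)
  moreover have "\<bar>u\<bar> \<le> J ^ 3" "\<bar>u\<bar>^2 \<le> J ^ 3" "\<bar>u\<bar>^3 \<le> J ^ 3"
    using abs_power_le_japanese_cube[of 1 u] abs_power_le_japanese_cube[of 2 u]
      abs_power_le_japanese_cube[of 3 u]
    unfolding J_def by simp_all
  moreover have "\<bar>3 * u + 3 * (a * d^2) + d^3\<bar> \<le> 3 * \<bar>u\<bar> + 3 * \<bar>a * d^2\<bar> + \<bar>d\<bar>^3"
    using abs_triangle_ineq[of "3 * u + 3 * (a * d^2)" "d^3"] abs_triangle_ineq[of "3 * u" "3 * (a * d^2)"]
    by (simp add: abs_mult power_abs)
  ultimately have d: "\<bar>d\<bar> \<le> J ^ 3" and
    cubic: "\<bar>3 * u + 3 * (a * d^2) + d^3\<bar> \<le> 7 * J ^ 3"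
    by linarith+
  have "phi \<alpha> \<beta> a - phi \<alpha> \<beta> \<xi> = \<beta> * d - \<alpha> * (3 * u + 3 * (a * d^2) + d^3)"
    unfolding phi_def u_def d_def by (simp add: power2_eq_square power3_eq_cube algebra_simps)
  also have "\<bar>\<dots>\<bar> \<le> \<bar>\<beta>\<bar> * \<bar>d\<bar> + \<bar>\<alpha>\<bar> * \<bar>3 * u + 3 * (a * d^2) + d^3\<bar>"
    by (metis abs_mult abs_triangle_ineq4)
  also have "\<dots> \<le> \<bar>\<beta>\<bar> * J ^ 3 + \<bar>\<alpha>\<bar> * (7 * J ^ 3)"
    using d cubic by (intro add_mono mult_left_mono) auto
  finally show ?thesis
    by (simp add: J_def u_def d_def algebra_simps)
qed

lemma japanese_powr_le_packet:
  assumes "1 \<le> a"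
  shows "japanese \<xi> powr t \<le> japanese a powr t * japanese (a^2 * (\<xi> - a)) powr \<bar>t\<bar>"
proof -
  have "japanese \<xi> powr t \<le> japanese a powr t * japanese (\<xi> - a) powr \<bar>t\<bar>"
    using japanese_powr_add_le[of a "\<xi> - a" t] by simp
  also have "\<dots> \<le> japanese a powr t * japanese (a^2 * (\<xi> - a)) powr \<bar>t\<bar>"
    using assms japanese_pos
    by (intro mult_left_mono powr_mono2 japanese_le_mult) (auto intro: less_imp_le one_le_power)
  finally show ?thesis .
qed

lemma japanese_phi_le:
  assumes "1 \<le> a"
  shows "japanese (\<tau> - phi \<alpha> \<beta> \<xi>)
    \<le> japanese (c - phi \<alpha> \<beta> a) * ((1 + 7 * \<bar>\<alpha>\<bar> + \<bar>\<beta>\<bar>) * japanese (\<tau> - c) * japanese (a^2 * (\<xi> - a)) ^ 3)"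
proof -
  define K where "K = 7 * \<bar>\<alpha>\<bar> + \<bar>\<beta>\<bar>"
  define J where "J = japanese (a^2 * (\<xi> - a)) ^ 3"
  have "1 \<le> J"
    unfolding J_def using japanese_ge_1 by (rule one_le_power)
  moreover have "\<bar>phi \<alpha> \<beta> a - phi \<alpha> \<beta> \<xi>\<bar> \<le> K * J"
    unfolding K_def J_def by (rule phi_diff_le[OF assms])
  ultimately have phase: "japanese (phi \<alpha> \<beta> a - phi \<alpha> \<beta> \<xi>) \<le> (1 + K) * J"
    unfolding japanese_def distrib_right by linarith
  have "japanese (\<tau> - phi \<alpha> \<beta> \<xi>) = japanese ((c - phi \<alpha> \<beta> a) + ((\<tau> - c) + (phi \<alpha> \<beta> a - phi \<alpha> \<beta> \<xi>)))"
    by simp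
  also have "\<dots> \<le> japanese (c - phi \<alpha> \<beta> a) * japanese ((\<tau> - c) + (phi \<alpha> \<beta> a - phi \<alpha> \<beta> \<xi>))"
    by (rule japanese_add_le)
  also have "\<dots> \<le> japanese (c - phi \<alpha> \<beta> a) * (japanese (\<tau> - c) * japanese (phi \<alpha> \<beta> a - phi \<alpha> \<beta> \<xi>))"
    by (intro mult_left_mono japanese_add_le) (simp add: less_imp_le japanese_pos)
  also have "\<dots> \<le> japanese (c - phi \<alpha> \<beta> a) * (japanese (\<tau> - c) * ((1 + K) * J))"
    using phase japanese_pos by (intro mult_left_mono) (auto intro: less_imp_le)
  finally show ?thesis
    by (simp add: K_def J_def ac_simps)
qed

lemma japanese_phi_powr_le:
  assumes "1 \<le> a" "1 \<le> Q" "r \<le> 0 \<or> japanese (c - phi \<alpha> \<beta> a) * (1 + 7 * \<bar>\<alpha>\<bar> + \<bar>\<beta>\<bar>) \<le> Q"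
  shows "japanese (\<tau> - phi \<alpha> \<beta> \<xi>) powr r \<le> (Q * japanese (\<tau> - c) * japanese (a^2 * (\<xi> - a)) ^ 3) powr \<bar>r\<bar>"
proof (rule powr_le_powr_abs)
  have "1 \<le> japanese (a^2 * (\<xi> - a)) ^ 3"
    using japanese_ge_1 by (rule one_le_power)
  then show "1 \<le> Q * japanese (\<tau> - c) * japanese (a^2 * (\<xi> - a)) ^ 3"
    using assms(2) japanese_ge_1 by (intro mult_ge1_I) auto
  have "japanese (c - phi \<alpha> \<beta> a) * ((1 + 7 * \<bar>\<alpha>\<bar> + \<bar>\<beta>\<bar>) * japanese (\<tau> - c) * japanese (a^2 * (\<xi> - a)) ^ 3)
      \<le> Q * japanese (\<tau> - c) * japanese (a^2 * (\<xi> - a)) ^ 3"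
    if "japanese (c - phi \<alpha> \<beta> a) * (1 + 7 * \<bar>\<alpha>\<bar> + \<bar>\<beta>\<bar>) \<le> Q"
    using mult_right_mono[OF that, of "japanese (\<tau> - c) * japanese (a^2 * (\<xi> - a)) ^ 3"] japanese_pos
    by (simp add: less_imp_le mult_ac)
  then show "r \<le> 0 \<or> japanese (\<tau> - phi \<alpha> \<beta> \<xi>) \<le> Q * japanese (\<tau> - c) * japanese (a^2 * (\<xi> - a)) ^ 3"
    using assms(3) japanese_phi_le[OF assms(1), of \<tau> \<alpha> \<beta> \<xi> c] by auto
qed (rule japanese_ge_1)

lemma japanese_phi_on_window:
  assumes "1 \<le> a" "\<bar>\<xi> - a\<bar> \<le> 1 / a^2" "\<bar>\<tau> - phi \<alpha> \<beta> a\<bar> \<le> 1"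
  shows "japanese (\<tau> - phi \<alpha> \<beta>' \<xi>) \<le> 2 + 8 * (7 * \<bar>\<alpha>\<bar> + \<bar>\<beta>\<bar>) + \<bar>\<beta>' - \<beta>\<bar> * (a + 1)"
proof -
  have "1 / a^2 \<le> 1"
    using assms(1) by (simp add: one_le_power)
  then have "\<bar>\<xi>\<bar> \<le> a + 1"
    using assms(1,2) by linarith
  then have "\<bar>(\<beta>' - \<beta>) * \<xi>\<bar> \<le> \<bar>\<beta>' - \<beta>\<bar> * (a + 1)"
    by (simp add: abs_mult mult_left_mono)
  moreover have "a^2 * \<bar>\<xi> - a\<bar> \<le> a^2 * (1 / a^2)"
    using assms(2) by (intro mult_left_mono) auto
  then have "\<bar>a^2 * (\<xi> - a)\<bar> \<le> 1"
    using assms(1) by (simp add: abs_mult)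
  then have "japanese (a^2 * (\<xi> - a)) ^ 3 \<le> 2 ^ 3"
    by (intro power_mono) (auto simp: japanese_def)
  then have "(7 * \<bar>\<alpha>\<bar> + \<bar>\<beta>\<bar>) * japanese (a^2 * (\<xi> - a)) ^ 3 \<le> (7 * \<bar>\<alpha>\<bar> + \<bar>\<beta>\<bar>) * 2 ^ 3"
    by (rule mult_left_mono) simp
  then have "\<bar>phi \<alpha> \<beta> a - phi \<alpha> \<beta> \<xi>\<bar> \<le> 8 * (7 * \<bar>\<alpha>\<bar> + \<bar>\<beta>\<bar>)"
    using phi_diff_le[OF assms(1), of \<alpha> \<beta> \<xi>] by simp
  moreover have "\<tau> - phi \<alpha> \<beta>' \<xi> = (\<tau> - phi \<alpha> \<beta> a) + (phi \<alpha> \<beta> a - phi \<alpha> \<beta> \<xi>) + (\<beta>' - \<beta>) * \<xi>"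
    by (simp add: phi_def algebra_simps)
  ultimately show ?thesis
    using assms(3) unfolding japanese_def by linarith
qed

section \<open>Gaussian integrals in the plane\<close>

lemma nn_integral_lborel_prod:
  fixes f g :: "real \<Rightarrow> real"
  assumes [measurable]: "f \<in> borel_measurable borel" "g \<in> borel_measurable borel"
    and "\<And>x. 0 \<le> f x" "\<And>y. 0 \<le> g y"
  shows "(\<integral>\<^sup>+z. ennreal (f (fst z) * g (snd z)) \<partial>lborel)
    = (\<integral>\<^sup>+x. ennreal (f x) \<partial>lborel) * (\<integral>\<^sup>+y. ennreal (g y) \<partial>lborel)"
proof -
  have "(\<integral>\<^sup>+z. ennreal (f (fst z) * g (snd z)) \<partial>lborel)
      = (\<integral>\<^sup>+x. \<integral>\<^sup>+y. ennreal (f x * g y) \<partial>lborel \<partial>lborel)"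
    unfolding lborel_prod[symmetric] by (subst lborel.nn_integral_fst[symmetric]) auto
  also have "\<dots> = (\<integral>\<^sup>+x. ennreal (f x) * (\<integral>\<^sup>+y. ennreal (g y) \<partial>lborel) \<partial>lborel)"
    using assms by (simp add: ennreal_mult nn_integral_cmult)
  also have "\<dots> = (\<integral>\<^sup>+x. ennreal (f x) \<partial>lborel) * (\<integral>\<^sup>+y. ennreal (g y) \<partial>lborel)"
    by (simp add: nn_integral_multc)
  finally show ?thesis .
qed

lemma nn_integral_gauss:
  assumes "0 < \<sigma>"
  shows "(\<integral>\<^sup>+x. ennreal (exp (- (((x - \<mu>) / \<sigma>)^2) / 2)) \<partial>lborel) = ennreal (sqrt (2 * pi) * \<sigma>)"
proof -
  have "(\<integral>\<^sup>+x. ennreal (normal_density \<mu> \<sigma> x) \<partial>lborel) = 1"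
    using assms by (subst nn_integral_eq_integral) (auto intro!: integrable_normal_density)
  moreover have "ennreal (exp (- (((x - \<mu>) / \<sigma>)^2) / 2))
      = ennreal (sqrt (2 * pi) * \<sigma>) * ennreal (normal_density \<mu> \<sigma> x)" for x
  proof -
    have "sqrt (2 * pi * \<sigma>^2) = sqrt (2 * pi) * \<sigma>"
      using assms by (simp add: real_sqrt_mult)
    then have "exp (- (((x - \<mu>) / \<sigma>)^2) / 2) = sqrt (2 * pi) * \<sigma> * normal_density \<mu> \<sigma> x"
      using assms by (simp add: normal_density_def power_divide)
    then show ?thesis
      using assms by (simp add: ennreal_mult[symmetric])
  qed
  ultimately show ?thesis
    by (simp add: nn_integral_cmult)
qed

definition packet_weight :: "real \<Rightarrow> real \<Rightarrow> real \<Rightarrow> real \<times> real \<Rightarrow> real" where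
  "packet_weight N a c z = (japanese (a^2 * (fst z - a)) * japanese (snd z - c)) powr N
    * exp (- ((a^2 * (fst z - a))^2)) * exp (- ((snd z - c)^2))"

lemma borel_measurable_packet_weight [measurable]: "packet_weight N a c \<in> borel_measurable borel"
  unfolding packet_weight_def[abs_def] japanese_def
  by (intro borel_measurable_continuous_onI continuous_intros) (auto simp: add_pos_nonneg)

lemma packet_weight_le_gauss:
  assumes "0 < a" and M: "\<And>x. japanese x powr N * exp (- (x^2) / 2) \<le> M"
  shows "packet_weight N a c z
    \<le> M^2 * (exp (- (((fst z - a) / (1 / a^2))^2) / 2) * exp (- (((snd z - c) / 1)^2) / 2))"
proof -
  define u where "u = a^2 * (fst z - a)"
  define v where "v = snd z - c"
  have "1 \<le> M"
    using M[of 0] by (simp add: japanese_def)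
  have "packet_weight N a c z = (japanese u powr N * exp (- (u^2) / 2))
      * (japanese v powr N * exp (- (v^2) / 2)) * (exp (- (u^2) / 2) * exp (- (v^2) / 2))"
    by (simp add: packet_weight_def u_def v_def powr_mult japanese_pos less_imp_le mult_exp_exp mult_ac)
  also have "\<dots> \<le> M * M * (exp (- (u^2) / 2) * exp (- (v^2) / 2))"
    using M \<open>1 \<le> M\<close> by (intro mult_right_mono mult_mono) auto
  also have "exp (- (u^2) / 2) * exp (- (v^2) / 2)
      = exp (- (((fst z - a) / (1 / a^2))^2) / 2) * exp (- (((snd z - c) / 1)^2) / 2)"
    using assms(1) by (simp add: u_def v_def field_simps)
  finally show ?thesis
    by (simp add: power2_eq_square)
qed

lemma nn_integral_packet_weight_le:
  assumes "0 \<le> N"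
  obtains B where "0 < B"
    "\<And>a c. 1 \<le> a \<Longrightarrow> (\<integral>\<^sup>+z. ennreal (packet_weight N a c z) \<partial>lborel) \<le> ennreal (B / a^2)"
proof -
  obtain M where "0 < M" and M: "\<And>x. japanese x powr N * exp (- (x^2) / 2) \<le> M"
    using japanese_powr_mult_gauss_bounded[OF assms] by blast
  have "(\<integral>\<^sup>+z. ennreal (packet_weight N a c z) \<partial>lborel) \<le> ennreal (2 * pi * M^2 / a^2)"
    if "1 \<le> a" for a c
  proof -
    define g1 where "g1 \<xi> = exp (- (((\<xi> - a) / (1 / a^2))^2) / 2)" for \<xi>
    define g2 where "g2 \<tau> = exp (- (((\<tau> - c) / 1)^2) / 2)" for \<tau>
    have [measurable]: "g1 \<in> borel_measurable borel" "g2 \<in> borel_measurable borel"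
      unfolding g1_def[abs_def] g2_def[abs_def] by measurable
    have "(\<integral>\<^sup>+z. ennreal (packet_weight N a c z) \<partial>lborel)
        \<le> (\<integral>\<^sup>+z. ennreal (M^2) * ennreal (g1 (fst z) * g2 (snd z)) \<partial>lborel)"
      using packet_weight_le_gauss[of a N M c] that M
      by (intro nn_integral_mono) (simp add: ennreal_mult[symmetric] g1_def g2_def ennreal_leI)
    also have "\<dots> = ennreal (M^2) * (\<integral>\<^sup>+z. ennreal (g1 (fst z) * g2 (snd z)) \<partial>lborel)"
    proof (rule nn_integral_cmult)
      have "(\<lambda>z. g1 (fst z) * g2 (snd z)) \<in> borel_measurable borel"
        unfolding g1_def g2_def using that
        by (intro borel_measurable_continuous_onI continuous_intros) auto
      then show "(\<lambda>z. ennreal (g1 (fst z) * g2 (snd z))) \<in> borel_measurable lborel"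
        by simp
    qed
    also have "(\<integral>\<^sup>+z. ennreal (g1 (fst z) * g2 (snd z)) \<partial>lborel)
        = (\<integral>\<^sup>+x. ennreal (g1 x) \<partial>lborel) * (\<integral>\<^sup>+y. ennreal (g2 y) \<partial>lborel)"
      by (rule nn_integral_lborel_prod) (simp_all add: g1_def g2_def)
    also have "(\<integral>\<^sup>+x. ennreal (g1 x) \<partial>lborel) = ennreal (sqrt (2 * pi) * (1 / a^2))"
      unfolding g1_def using that by (intro nn_integral_gauss) simp
    also have "(\<integral>\<^sup>+y. ennreal (g2 y) \<partial>lborel) = ennreal (sqrt (2 * pi) * 1)"
      unfolding g2_def by (intro nn_integral_gauss) simp
    also have "ennreal (M^2) * (ennreal (sqrt (2 * pi) * (1 / a^2)) * ennreal (sqrt (2 * pi) * 1))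
        = ennreal (2 * pi * M^2 / a^2)"
      by (simp add: ennreal_mult[symmetric] field_simps)
    finally show ?thesis .
  qed
  moreover have "0 < 2 * pi * M^2"
    using \<open>0 < M\<close> by simp
  ultimately show thesis
    using that by blast
qed

lemma nn_integral_ge_on_box:
  fixes h :: "real \<times> real \<Rightarrow> real"
  assumes "0 \<le> \<delta>" "0 \<le> \<epsilon>" "0 \<le> L"
    and "\<And>\<xi> \<tau>. \<bar>\<xi> - x0\<bar> \<le> \<delta> \<Longrightarrow> \<bar>\<tau> - t0\<bar> \<le> \<epsilon> \<Longrightarrow> L \<le> h (\<xi>, \<tau>)"
  shows "ennreal (4 * \<delta> * \<epsilon> * L) \<le> (\<integral>\<^sup>+z. ennreal (h z) \<partial>lborel)"
proof -
  define box where "box = {x0 - \<delta> .. x0 + \<delta>} \<times> {t0 - \<epsilon> .. t0 + \<epsilon>}"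
  have "ennreal (4 * \<delta> * \<epsilon> * L) = ennreal L * (ennreal (2 * \<delta>) * ennreal (2 * \<epsilon>))"
    using assms by (simp add: ennreal_mult[symmetric] mult_ac)
  also have "\<dots> = ennreal L * emeasure (lborel \<Otimes>\<^sub>M lborel) box"
    using assms unfolding box_def by (simp add: lborel.emeasure_pair_measure_Times)
  also have "\<dots> = (\<integral>\<^sup>+z. ennreal L * indicator box z \<partial>(lborel \<Otimes>\<^sub>M lborel))"
    by (subst nn_integral_cmult_indicator) (auto simp: box_def)
  also have "\<dots> \<le> (\<integral>\<^sup>+z. ennreal (h z) \<partial>(lborel \<Otimes>\<^sub>M lborel))"
  proof (intro nn_integral_mono)
    fix z :: "real \<times> real"
    show "ennreal L * indicator box z \<le> ennreal (h z)"
      using assms(4)[of "fst z" "snd z"]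
      by (cases "z \<in> box") (auto simp: box_def abs_le_iff ennreal_leI)
  qed
  also have "\<dots> = (\<integral>\<^sup>+z. ennreal (h z) \<partial>lborel)"
    by (simp add: lborel_prod)
  finally show ?thesis .
qed

section \<open>Fourier restriction norms of the wave packets\<close>

definition Xintegral :: "real \<Rightarrow> real \<Rightarrow> real \<Rightarrow> real \<Rightarrow> (real \<times> real \<Rightarrow> complex) \<Rightarrow> ennreal" where
  "Xintegral \<alpha> \<beta> s b w = (\<integral>\<^sup>+ p. ennreal ((japanese (fst p) powr s
      * japanese (snd p - phi \<alpha> \<beta> (fst p)) powr b * cmod (fourier2 w p))\<^sup>2) \<partial>lborel)"

lemma Xnorm_sq: "(Xnorm \<alpha> \<beta> s b w)\<^sup>2 = enn2real (Xintegral \<alpha> \<beta> s b w)"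
  by (simp add: Xnorm_def Xintegral_def)

lemma Xintegral_le_Xintegral_add_1:
  assumes "\<And>z. cmod (fourier2 v z) = \<bar>fst z\<bar> * cmod (fourier2 w z)"
  shows "Xintegral \<alpha> \<beta> s b v \<le> Xintegral \<alpha> \<beta> (s + 1) b w"
  unfolding Xintegral_def
proof (intro nn_integral_mono ennreal_leI)
  fix z :: "real \<times> real"
  have "\<bar>fst z\<bar> * japanese (fst z) powr s \<le> japanese (fst z) powr (s + 1)"
    using mult_right_mono[OF abs_le_japanese[of "fst z"], of "japanese (fst z) powr s"]
    by (simp add: powr_add japanese_pos less_imp_le mult.commute)
  then have "(\<bar>fst z\<bar> * japanese (fst z) powr s) * (japanese (snd z - phi \<alpha> \<beta> (fst z)) powr b * cmod (fourier2 w z))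
      \<le> japanese (fst z) powr (s + 1) * (japanese (snd z - phi \<alpha> \<beta> (fst z)) powr b * cmod (fourier2 w z))"
    by (rule mult_right_mono) simp
  then show "(japanese (fst z) powr s * japanese (snd z - phi \<alpha> \<beta> (fst z)) powr b * cmod (fourier2 v z))\<^sup>2
      \<le> (japanese (fst z) powr (s + 1) * japanese (snd z - phi \<alpha> \<beta> (fst z)) powr b * cmod (fourier2 w z))\<^sup>2"
    unfolding assms by (intro power_mono) (simp_all add: mult_ac)
qed

lemma power2_exp_half: "(exp (- (x / 2)))^2 = exp (- x :: real)"
  by (simp add: power2_eq_square mult_exp_exp)

lemma packet_integrand_le:
  assumes "1 \<le> a" "1 \<le> Q"
    and modulation: "japanese (\<tau> - phi \<alpha> \<beta> \<xi>) powr (2 * r)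
      \<le> (Q * japanese (\<tau> - c) * japanese (a^2 * (\<xi> - a)) ^ 3) powr \<bar>2 * r\<bar>"
  shows "(japanese \<xi> powr s * japanese (\<tau> - phi \<alpha> \<beta> \<xi>) powr r
      * (g * exp (- ((a^2 * (\<xi> - a))^2) / 2) * exp (- ((\<tau> - c)^2) / 2)))^2
    \<le> g^2 * japanese a powr (2 * s) * Q powr \<bar>2 * r\<bar> * packet_weight (2 * \<bar>s\<bar> + 6 * \<bar>r\<bar>) a c (\<xi>, \<tau>)"
proof -
  define u where "u = a^2 * (\<xi> - a)"
  define v where "v = \<tau> - c"
  define N where "N = 2 * \<bar>s\<bar> + 6 * \<bar>r\<bar>"
  define E where "E = g^2 * (exp (- (u^2)) * exp (- (v^2)))"
  have "japanese \<xi> powr (2 * s) \<le> japanese a powr (2 * s) * japanese u powr (2 * \<bar>s\<bar>)"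
    using japanese_powr_le_packet[OF assms(1), of \<xi> "2 * s"] by (simp add: u_def abs_mult)
  moreover have "japanese (\<tau> - phi \<alpha> \<beta> \<xi>) powr (2 * r)
      \<le> Q powr \<bar>2 * r\<bar> * (japanese v powr (2 * \<bar>r\<bar>) * japanese u powr (6 * \<bar>r\<bar>))"
  proof -
    have "(japanese u ^ 3) powr \<bar>2 * r\<bar> = japanese u powr (6 * \<bar>r\<bar>)"
      by (simp add: powr_realpow[symmetric] japanese_pos powr_powr abs_mult)
    then show ?thesis
      using modulation assms(2)
      by (simp add: u_def v_def powr_mult japanese_pos less_imp_le abs_mult)
  qed
  ultimately have "japanese \<xi> powr (2 * s) * japanese (\<tau> - phi \<alpha> \<beta> \<xi>) powr (2 * r)
      \<le> (japanese a powr (2 * s) * japanese u powr (2 * \<bar>s\<bar>))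
        * (Q powr \<bar>2 * r\<bar> * (japanese v powr (2 * \<bar>r\<bar>) * japanese u powr (6 * \<bar>r\<bar>)))"
    by (intro mult_mono) auto
  also have "\<dots> = japanese a powr (2 * s) * Q powr \<bar>2 * r\<bar>
      * (japanese u powr N * japanese v powr (2 * \<bar>r\<bar>))"
    by (simp add: N_def powr_add mult_ac)
  also have "\<dots> \<le> japanese a powr (2 * s) * Q powr \<bar>2 * r\<bar> * (japanese u * japanese v) powr N"
    using japanese_ge_1[of v]
    by (auto simp: N_def powr_mult japanese_pos less_imp_le intro!: mult_left_mono powr_mono)
  finally have "japanese \<xi> powr (2 * s) * japanese (\<tau> - phi \<alpha> \<beta> \<xi>) powr (2 * r) * E
      \<le> japanese a powr (2 * s) * Q powr \<bar>2 * r\<bar> * (japanese u * japanese v) powr N * E"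
    by (rule mult_right_mono) (simp add: E_def)
  then show ?thesis
    by (simp add: packet_weight_def u_def v_def N_def E_def power_mult_distrib power2_japanese_powr
        power2_exp_half mult_ac)
qed

definition packet_scale :: "real \<Rightarrow> real \<Rightarrow> real" where
  "packet_scale s a = 4 * pi^2 * a^2 * japanese a powr (2 * s)"

lemma packet_scale_pos: "0 < a \<Longrightarrow> 0 < packet_scale s a"
  unfolding packet_scale_def using japanese_pos[of a] by (intro mult_pos_pos) auto

lemma Xintegral_wave_packet_le:
  assumes a: "1 \<le> a" and Q: "1 \<le> Q"
    and modulation: "\<And>\<xi> \<tau>. japanese (\<tau> - phi \<alpha> \<beta> \<xi>) powr (2 * r)
      \<le> (Q * japanese (\<tau> - c) * japanese (a^2 * (\<xi> - a)) ^ 3) powr \<bar>2 * r\<bar>"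
    and B: "(\<integral>\<^sup>+z. ennreal (packet_weight (2 * \<bar>s\<bar> + 6 * \<bar>r\<bar>) a c z) \<partial>lborel) \<le> ennreal (B / a^2)"
  shows "Xintegral \<alpha> \<beta> s r (wave_packet a c) \<le> ennreal (packet_scale s a * Q powr \<bar>2 * r\<bar> * B)"
proof -
  define N where "N = 2 * \<bar>s\<bar> + 6 * \<bar>r\<bar>"
  define D where "D = (2 * pi * a^2)^2 * japanese a powr (2 * s) * Q powr \<bar>2 * r\<bar>"
  have "0 \<le> D"
    by (simp add: D_def)
  have "Xintegral \<alpha> \<beta> s r (wave_packet a c) \<le> (\<integral>\<^sup>+z. ennreal D * ennreal (packet_weight N a c z) \<partial>lborel)"
    unfolding Xintegral_def
  proof (intro nn_integral_mono)
    fix z :: "real \<times> real"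
    obtain \<xi> \<tau> where z: "z = (\<xi>, \<tau>)"
      by (cases z)
    have "(japanese (fst z) powr s * japanese (snd z - phi \<alpha> \<beta> (fst z)) powr r
        * cmod (fourier2 (wave_packet a c) z))\<^sup>2 \<le> D * packet_weight N a c z"
      using packet_integrand_le[OF a Q modulation[of \<tau> \<xi>], where s = s and g = "2 * pi * a^2"] a
      unfolding D_def N_def z by (simp only: fst_conv snd_conv norm_fourier2_wave_packet)
    then show "ennreal ((japanese (fst z) powr s * japanese (snd z - phi \<alpha> \<beta> (fst z)) powr r
        * cmod (fourier2 (wave_packet a c) z))\<^sup>2) \<le> ennreal D * ennreal (packet_weight N a c z)"
      unfolding ennreal_mult'[OF \<open>0 \<le> D\<close>, symmetric] by (rule ennreal_leI)
  qed
  also have "\<dots> = ennreal D * (\<integral>\<^sup>+z. ennreal (packet_weight N a c z) \<partial>lborel)"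
    by (rule nn_integral_cmult) simp
  also have "\<dots> \<le> ennreal D * ennreal (B / a^2)"
    using B unfolding N_def by (rule mult_left_mono) simp
  also have "\<dots> = ennreal (packet_scale s a * Q powr \<bar>2 * r\<bar> * B)"
    unfolding ennreal_mult'[OF \<open>0 \<le> D\<close>, symmetric]
  proof (rule arg_cong[where f = ennreal])
    show "D * (B / a^2) = packet_scale s a * Q powr \<bar>2 * r\<bar> * B"
      using a unfolding D_def packet_scale_def by (simp add: power_mult_distrib power2_eq_square)
  qed
  finally show ?thesis .
qed

lemma packet_integrand_dx_ge:
  assumes a: "2 \<le> a" and window: "\<bar>\<xi> - a\<bar> \<le> 1 / a^2" "\<bar>\<tau> - c\<bar> \<le> 1"
    and R: "japanese (\<tau> - phi \<alpha> \<beta> \<xi>) \<le> R"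
  shows "g^2 * (a^2 / 4) * (japanese a powr (2 * s) / 2 powr \<bar>2 * s\<bar>) * R powr min 0 (2 * r) * exp (- 2)
    \<le> (japanese \<xi> powr s * japanese (\<tau> - phi \<alpha> \<beta> \<xi>) powr r
      * (\<bar>\<xi>\<bar> * (g * exp (- ((a^2 * (\<xi> - a))^2) / 2) * exp (- ((\<tau> - c)^2) / 2))))^2"
proof -
  define u where "u = a^2 * (\<xi> - a)"
  define v where "v = \<tau> - c"
  have "1 / a^2 \<le> 1"
    using a by (simp add: one_le_power)
  have "a / 2 \<le> \<xi>"
    using a window(1) \<open>1 / a^2 \<le> 1\<close> by linarith
  then have "(a / 2)^2 \<le> \<xi>^2"
    using a by (intro power_mono) auto
  then have frequency: "a^2 / 4 \<le> \<xi>^2"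
    by (simp add: power_divide)
  have "japanese a powr (2 * s) / 2 powr \<bar>2 * s\<bar> \<le> japanese a powr (2 * s) / japanese (\<xi> - a) powr \<bar>2 * s\<bar>"
  proof (rule divide_left_mono)
    show "japanese (\<xi> - a) powr \<bar>2 * s\<bar> \<le> 2 powr \<bar>2 * s\<bar>"
      using window(1) \<open>1 / a^2 \<le> 1\<close> japanese_pos
      by (intro powr_mono2) (auto simp: japanese_def)
  qed (use japanese_pos[of "\<xi> - a"] in \<open>auto intro: mult_pos_pos\<close>)
  also have "\<dots> \<le> japanese \<xi> powr (2 * s)"
    using japanese_powr_add_ge[of a "2 * s" "\<xi> - a"] by simp
  finally have weight_\<xi>: "japanese a powr (2 * s) / 2 powr \<bar>2 * s\<bar> \<le> japanese \<xi> powr (2 * s)" .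
  have weight_\<tau>: "R powr min 0 (2 * r) \<le> japanese (\<tau> - phi \<alpha> \<beta> \<xi>) powr (2 * r)"
    using japanese_ge_1 R by (rule powr_min_0_le)
  have "\<bar>u\<bar> \<le> 1"
    using a window(1) mult_left_mono[OF window(1), of "a^2"] by (simp add: u_def abs_mult)
  then have "exp (- 1) * exp (- 1) \<le> exp (- (u^2)) * exp (- (v^2))"
    using window(2) by (intro mult_mono) (auto simp: v_def abs_square_le_1)
  then have gauss: "exp (- 2) \<le> exp (- (u^2)) * exp (- (v^2))"
    by (simp add: mult_exp_exp)
  have "(a^2 / 4) * (japanese a powr (2 * s) / 2 powr \<bar>2 * s\<bar>) * R powr min 0 (2 * r) * (g^2 * exp (- 2))
      \<le> \<xi>^2 * japanese \<xi> powr (2 * s) * japanese (\<tau> - phi \<alpha> \<beta> \<xi>) powr (2 * r)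
        * (g^2 * (exp (- (u^2)) * exp (- (v^2))))"
    using frequency weight_\<xi> weight_\<tau> gauss by (intro mult_mono) auto
  then show ?thesis
    by (simp add: u_def v_def power_mult_distrib power2_japanese_powr power2_exp_half mult_ac)
qed

lemma Xintegral_dx_wave_packet_ge:
  assumes a: "2 \<le> a"
    and R: "\<And>\<xi> \<tau>. \<bar>\<xi> - a\<bar> \<le> 1 / a^2 \<Longrightarrow> \<bar>\<tau> - c\<bar> \<le> 1 \<Longrightarrow> japanese (\<tau> - phi \<alpha> \<beta> \<xi>) \<le> R"
  shows "ennreal (packet_scale s a * (a^2 * R powr min 0 (2 * r) * exp (- 2) / 2 powr \<bar>2 * s\<bar>))
    \<le> Xintegral \<alpha> \<beta> s r (dx (wave_packet a c))"
proof -
  define L where "L = (2 * pi * a^2)^2 * (a^2 / 4) * (japanese a powr (2 * s) / 2 powr \<bar>2 * s\<bar>)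
    * R powr min 0 (2 * r) * exp (- 2)"
  have "ennreal (4 * (1 / a^2) * 1 * L) \<le> Xintegral \<alpha> \<beta> s r (dx (wave_packet a c))"
    unfolding Xintegral_def
  proof (rule nn_integral_ge_on_box)
    fix \<xi> \<tau> :: real
    assume window: "\<bar>\<xi> - a\<bar> \<le> 1 / a^2" "\<bar>\<tau> - c\<bar> \<le> 1"
    show "L \<le> (japanese (fst (\<xi>, \<tau>)) powr s * japanese (snd (\<xi>, \<tau>) - phi \<alpha> \<beta> (fst (\<xi>, \<tau>))) powr r
        * cmod (fourier2 (dx (wave_packet a c)) (\<xi>, \<tau>)))\<^sup>2"
      using packet_integrand_dx_ge[OF a window R[OF window], where s = s and r = r and g = "2 * pi * a^2"] a
      by (simp add: L_def norm_fourier2_dx_wave_packet norm_fourier2_wave_packet)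
  qed (simp_all add: L_def japanese_pos)
  moreover have "4 * (1 / a^2) * 1 * L = packet_scale s a * (a^2 * R powr min 0 (2 * r) * exp (- 2) / 2 powr \<bar>2 * s\<bar>)"
    using a by (simp add: L_def packet_scale_def power_mult_distrib power2_eq_square)
  ultimately show ?thesis
    by simp
qed

lemma Xnorm_wave_packet_le:
  obtains B where "\<And>a c. 1 \<le> a \<Longrightarrow> b \<le> 0 \<or> c = phi \<alpha> \<beta> a \<Longrightarrow>
    (Xnorm \<alpha> \<beta> s b (wave_packet a c))\<^sup>2 \<le> packet_scale s a * B"
proof -
  define Q where "Q = 1 + 7 * \<bar>\<alpha>\<bar> + \<bar>\<beta>\<bar>"
  have "0 \<le> 2 * \<bar>s\<bar> + 6 * \<bar>b\<bar>"
    by simp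
  then obtain B where "0 < B" and B: "\<And>a c. 1 \<le> a \<Longrightarrow>
      (\<integral>\<^sup>+z. ennreal (packet_weight (2 * \<bar>s\<bar> + 6 * \<bar>b\<bar>) a c z) \<partial>lborel) \<le> ennreal (B / a^2)"
    using nn_integral_packet_weight_le by blast
  show thesis
  proof (rule that)
    fix a c :: real
    assume a: "1 \<le> a" and c: "b \<le> 0 \<or> c = phi \<alpha> \<beta> a"
    have "Xintegral \<alpha> \<beta> s b (wave_packet a c) \<le> ennreal (packet_scale s a * Q powr \<bar>2 * b\<bar> * B)"
      using c by (intro Xintegral_wave_packet_le[OF a] japanese_phi_powr_le[OF a] B[OF a])
        (auto simp: Q_def japanese_def)
    moreover have "0 \<le> packet_scale s a * Q powr \<bar>2 * b\<bar> * B"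
      using packet_scale_pos[of a s] a \<open>0 < B\<close> by simp
    ultimately show "(Xnorm \<alpha> \<beta> s b (wave_packet a c))\<^sup>2 \<le> packet_scale s a * (Q powr \<bar>2 * b\<bar> * B)"
      unfolding Xnorm_sq by (simp add: enn2real_leI mult.assoc)
  qed
qed

text \<open>\<open>Xnorm\<close> is \<open>sqrt\<close> of \<open>enn2real\<close> of the integral, hence \<open>0\<close> when the integral is infinite;
  finiteness is what lets the lower bound on the integral pass to the norm.\<close>

lemma Xintegral_dx_wave_packet_finite:
  assumes "1 \<le> a"
  shows "Xintegral \<alpha> \<beta> s r (dx (wave_packet a c)) < \<infinity>"
proof -
  define Q where "Q = japanese (c - phi \<alpha> \<beta> a) * (1 + 7 * \<bar>\<alpha>\<bar> + \<bar>\<beta>\<bar>)"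
  have "1 \<le> Q"
    unfolding Q_def using japanese_ge_1 by (intro mult_ge1_I) auto
  have "0 \<le> 2 * \<bar>s + 1\<bar> + 6 * \<bar>r\<bar>"
    by simp
  then obtain B where B: "\<And>a c. 1 \<le> a \<Longrightarrow>
      (\<integral>\<^sup>+z. ennreal (packet_weight (2 * \<bar>s + 1\<bar> + 6 * \<bar>r\<bar>) a c z) \<partial>lborel) \<le> ennreal (B / a^2)"
    using nn_integral_packet_weight_le by blast
  have "Xintegral \<alpha> \<beta> s r (dx (wave_packet a c)) \<le> Xintegral \<alpha> \<beta> (s + 1) r (wave_packet a c)"
    using assms by (intro Xintegral_le_Xintegral_add_1 norm_fourier2_dx_wave_packet) simp
  also have "\<dots> \<le> ennreal (packet_scale (s + 1) a * Q powr \<bar>2 * r\<bar> * B)"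
    using \<open>1 \<le> Q\<close>
    by (intro Xintegral_wave_packet_le[OF assms] japanese_phi_powr_le[OF assms] B[OF assms])
      (auto simp: Q_def)
  also have "\<dots> < \<infinity>"
    by simp
  finally show ?thesis .
qed

lemma Xnorm_dx_wave_packet_ge:
  assumes "2 \<le> a"
    and "\<And>\<xi> \<tau>. \<bar>\<xi> - a\<bar> \<le> 1 / a^2 \<Longrightarrow> \<bar>\<tau> - c\<bar> \<le> 1 \<Longrightarrow> japanese (\<tau> - phi \<alpha> \<beta> \<xi>) \<le> R"
  shows "packet_scale s a * (a^2 * R powr min 0 (2 * r) * exp (- 2) / 2 powr \<bar>2 * s\<bar>)
    \<le> (Xnorm \<alpha> \<beta> s r (dx (wave_packet a c)))\<^sup>2"
proof -
  have "0 \<le> packet_scale s a * (a^2 * R powr min 0 (2 * r) * exp (- 2) / 2 powr \<bar>2 * s\<bar>)"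
    using packet_scale_pos[of a s] assms(1) by simp
  moreover have "Xintegral \<alpha> \<beta> s r (dx (wave_packet a c)) < \<infinity>"
    using assms(1) by (intro Xintegral_dx_wave_packet_finite) simp
  moreover have "ennreal (packet_scale s a * (a^2 * R powr min 0 (2 * r) * exp (- 2) / 2 powr \<bar>2 * s\<bar>))
      \<le> Xintegral \<alpha> \<beta> s r (dx (wave_packet a c))"
    using assms by (rule Xintegral_dx_wave_packet_ge)
  ultimately show ?thesis
    unfolding Xnorm_sq using enn2real_mono by fastforce
qed

lemma Xnorm_dx_wave_packet_growth:
  obtains l where "0 < l" "\<And>a. 2 \<le> a \<Longrightarrow>
    packet_scale s a * (l * a powr (2 + min 0 (2 * r))) \<le> (Xnorm \<alpha> \<beta>' s r (dx (wave_packet a (phi \<alpha> \<beta> a))))\<^sup>2"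
proof -
  define L where "L = 2 + 8 * (7 * \<bar>\<alpha>\<bar> + \<bar>\<beta>\<bar>) + 2 * \<bar>\<beta>' - \<beta>\<bar>"
  define m where "m = min 0 (2 * r)"
  have "0 < L"
    by (simp add: L_def add_pos_nonneg)
  show thesis
  proof (rule that[of "L powr m * (exp (- 2) / 2 powr \<bar>2 * s\<bar>)"])
    show "0 < L powr m * (exp (- 2) / 2 powr \<bar>2 * s\<bar>)"
      using \<open>0 < L\<close> by simp
    fix a :: real
    assume a: "2 \<le> a"
    have "japanese (\<tau> - phi \<alpha> \<beta>' \<xi>) \<le> L * a"
      if "\<bar>\<xi> - a\<bar> \<le> 1 / a^2" "\<bar>\<tau> - phi \<alpha> \<beta> a\<bar> \<le> 1" for \<xi> \<tau>
    proof -
      have "japanese (\<tau> - phi \<alpha> \<beta>' \<xi>) \<le> 2 + 8 * (7 * \<bar>\<alpha>\<bar> + \<bar>\<beta>\<bar>) + \<bar>\<beta>' - \<beta>\<bar> * (a + 1)"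
        using a that by (intro japanese_phi_on_window) auto
      moreover have "2 + 8 * (7 * \<bar>\<alpha>\<bar> + \<bar>\<beta>\<bar>) \<le> (2 + 8 * (7 * \<bar>\<alpha>\<bar> + \<bar>\<beta>\<bar>)) * a"
        using a by (simp add: mult_le_cancel_left1)
      moreover have "\<bar>\<beta>' - \<beta>\<bar> * (a + 1) \<le> \<bar>\<beta>' - \<beta>\<bar> * (2 * a)"
        using a by (intro mult_left_mono) auto
      ultimately show ?thesis
        unfolding L_def by (simp add: algebra_simps)
    qed
    then have "packet_scale s a * (a^2 * (L * a) powr m * exp (- 2) / 2 powr \<bar>2 * s\<bar>)
        \<le> (Xnorm \<alpha> \<beta>' s r (dx (wave_packet a (phi \<alpha> \<beta> a))))\<^sup>2"
      unfolding m_def using a by (intro Xnorm_dx_wave_packet_ge) auto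
    moreover have "a^2 * (L * a) powr m * exp (- 2) / 2 powr \<bar>2 * s\<bar>
        = L powr m * (exp (- 2) / 2 powr \<bar>2 * s\<bar>) * a powr (2 + m)"
      using a \<open>0 < L\<close> by (simp add: powr_mult powr_add powr_numeral)
    ultimately show "packet_scale s a * (L powr m * (exp (- 2) / 2 powr \<bar>2 * s\<bar>) * a powr (2 + min 0 (2 * r)))
        \<le> (Xnorm \<alpha> \<beta>' s r (dx (wave_packet a (phi \<alpha> \<beta> a))))\<^sup>2"
      by (simp only: m_def)
  qed
qed

lemma Xnorm_dx_wave_packet_growth_same:
  obtains l where "0 < l" "\<And>a. 2 \<le> a \<Longrightarrow>
    packet_scale s a * (l * a powr 2) \<le> (Xnorm \<alpha> \<beta> s r (dx (wave_packet a (phi \<alpha> \<beta> a))))\<^sup>2"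
proof -
  define R where "R = 2 + 8 * (7 * \<bar>\<alpha>\<bar> + \<bar>\<beta>\<bar>)"
  show thesis
  proof (rule that[of "R powr min 0 (2 * r) * (exp (- 2) / 2 powr \<bar>2 * s\<bar>)"])
    show "0 < R powr min 0 (2 * r) * (exp (- 2) / 2 powr \<bar>2 * s\<bar>)"
      by (simp add: R_def add_pos_nonneg)
    fix a :: real
    assume a: "2 \<le> a"
    have "packet_scale s a * (a^2 * R powr min 0 (2 * r) * exp (- 2) / 2 powr \<bar>2 * s\<bar>)
        \<le> (Xnorm \<alpha> \<beta> s r (dx (wave_packet a (phi \<alpha> \<beta> a))))\<^sup>2"
      using a japanese_phi_on_window[of a _ _ \<alpha> \<beta> \<beta>] by (intro Xnorm_dx_wave_packet_ge) (auto simp: R_def)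
    then show "packet_scale s a * (R powr min 0 (2 * r) * (exp (- 2) / 2 powr \<bar>2 * s\<bar>) * a powr 2)
        \<le> (Xnorm \<alpha> \<beta> s r (dx (wave_packet a (phi \<alpha> \<beta> a))))\<^sup>2"
      using a by (simp add: powr_numeral mult_ac)
  qed
qed

lemma wave_packet_norm_bounds:
  obtains l \<gamma> :: real and c :: "real \<Rightarrow> real" and B :: real where "0 < l" "0 < \<gamma>"
    "\<And>a. 2 \<le> a \<Longrightarrow> (Xnorm \<alpha> \<beta>1 s b (wave_packet a (c a)))\<^sup>2 \<le> packet_scale s a * B"
    "\<And>a. 2 \<le> a \<Longrightarrow>
      packet_scale s a * (l * a powr \<gamma>) \<le> (Xnorm \<alpha> \<beta>2 s (b - 1) (dx (wave_packet a (c a))))\<^sup>2"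
proof -
  obtain B where upper: "\<And>a c. 1 \<le> a \<Longrightarrow> b \<le> 0 \<or> c = phi \<alpha> \<beta>1 a \<Longrightarrow>
      (Xnorm \<alpha> \<beta>1 s b (wave_packet a c))\<^sup>2 \<le> packet_scale s a * B"
    by (rule Xnorm_wave_packet_le) (rule that)
  show thesis
  proof (cases "0 < b")
    case True
    obtain l where "0 < l" and lower: "\<And>a. 2 \<le> a \<Longrightarrow> packet_scale s a * (l * a powr (2 + min 0 (2 * (b - 1))))
        \<le> (Xnorm \<alpha> \<beta>2 s (b - 1) (dx (wave_packet a (phi \<alpha> \<beta>1 a))))\<^sup>2"
      by (rule Xnorm_dx_wave_packet_growth) (rule that)
    show thesis
      by (rule that[OF \<open>0 < l\<close>, of "2 + min 0 (2 * (b - 1))" "phi \<alpha> \<beta>1" B])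
        (use True upper lower in auto)
  next
    case False
    obtain l where "0 < l" and lower: "\<And>a. 2 \<le> a \<Longrightarrow> packet_scale s a * (l * a powr 2)
        \<le> (Xnorm \<alpha> \<beta>2 s (b - 1) (dx (wave_packet a (phi \<alpha> \<beta>2 a))))\<^sup>2"
      by (rule Xnorm_dx_wave_packet_growth_same) (rule that)
    show thesis
      by (rule that[OF \<open>0 < l\<close>, of 2 "phi \<alpha> \<beta>2" B]) (use False upper lower in auto)
  qed
qed

lemma power2_le_mult_power2:
  fixes x y C :: real
  assumes "0 \<le> x" "0 \<le> y" "y \<le> C * x"
  shows "y\<^sup>2 \<le> C\<^sup>2 * x\<^sup>2"
proof (cases "0 \<le> C")
  case True
  then show ?thesis
    using assms by (metis power_mono power_mult_distrib)
next
  case False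
  then have "y = 0"
    using assms mult_nonpos_nonneg[of C x] by linarith
  then show ?thesis
    by simp
qed

lemma ex_powr_gt:
  fixes a0 X l \<gamma> :: real
  assumes "0 < l" "0 < \<gamma>"
  obtains a where "a0 \<le> a" "X < l * a powr \<gamma>"
proof -
  have "\<forall>\<^sub>F a in at_top. X / l < a powr \<gamma>"
    using real_powr_at_top[OF assms(2)] unfolding filterlim_at_top_dense by blast
  moreover have "\<forall>\<^sub>F a in at_top. a0 \<le> a"
    by (rule eventually_ge_at_top)
  ultimately have "\<forall>\<^sub>F a in at_top. a0 \<le> a \<and> X / l < a powr \<gamma>"
    by eventually_elim simp
  then obtain a where "a0 \<le> a" "X / l < a powr \<gamma>"
    unfolding eventually_at_top_linorder by blast
  with assms(1) show thesis
    by (intro that) (simp_all add: divide_less_eq mult.commute)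
qed

theorem proposition2p3:
  fixes \<alpha>1 \<alpha>2 s b \<beta>1 \<beta>2 :: real
  assumes "\<alpha>1 = \<alpha>2" and "\<alpha>1 \<noteq> 0"
  shows "\<not> (\<exists>C::real. \<forall>w \<in> schwartz.
            Xnorm \<alpha>2 \<beta>2 s (b - 1) (dx w) \<le> C * Xnorm \<alpha>1 \<beta>1 s b w)"
proof
  assume "\<exists>C::real. \<forall>w \<in> schwartz. Xnorm \<alpha>2 \<beta>2 s (b - 1) (dx w) \<le> C * Xnorm \<alpha>1 \<beta>1 s b w"
  then obtain C where C: "\<And>w. w \<in> schwartz \<Longrightarrow> Xnorm \<alpha>1 \<beta>2 s (b - 1) (dx w) \<le> C * Xnorm \<alpha>1 \<beta>1 s b w"
    using assms(1) by blast
  obtain l \<gamma> :: real and c :: "real \<Rightarrow> real" and B :: real where "0 < l" "0 < \<gamma>"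
    and upper: "\<And>a. 2 \<le> a \<Longrightarrow> (Xnorm \<alpha>1 \<beta>1 s b (wave_packet a (c a)))\<^sup>2 \<le> packet_scale s a * B"
    and lower: "\<And>a. 2 \<le> a \<Longrightarrow>
      packet_scale s a * (l * a powr \<gamma>) \<le> (Xnorm \<alpha>1 \<beta>2 s (b - 1) (dx (wave_packet a (c a))))\<^sup>2"
    by (rule wave_packet_norm_bounds[of \<alpha>1 \<beta>1 s b \<beta>2]) (rule that)
  obtain a where a: "2 \<le> a" and large: "C\<^sup>2 * B < l * a powr \<gamma>"
    by (rule ex_powr_gt[OF \<open>0 < l\<close> \<open>0 < \<gamma>\<close>]) (rule that)
  have "packet_scale s a * (l * a powr \<gamma>) \<le> (Xnorm \<alpha>1 \<beta>2 s (b - 1) (dx (wave_packet a (c a))))\<^sup>2"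
    using a by (rule lower)
  also have "\<dots> \<le> C\<^sup>2 * (Xnorm \<alpha>1 \<beta>1 s b (wave_packet a (c a)))\<^sup>2"
    using a by (intro power2_le_mult_power2 C wave_packet_in_schwartz) (simp_all add: Xnorm_def)
  also have "\<dots> \<le> C\<^sup>2 * (packet_scale s a * B)"
    using a by (intro mult_left_mono upper) simp_all
  also have "\<dots> = packet_scale s a * (C\<^sup>2 * B)"
    by (rule mult.left_commute)
  finally show False
    using large packet_scale_pos[of a s] a by simp
qed

end
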